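(* Let $F_0$ and $F_1$ be continuous cumulative distribution functions on $\mathbb{R}$, let $\bar F_j = 1-F_j$, and define $D(x)=\bar F_1(\bar F_0^{-1}(x))$ for $x\in[0,1]$ and $\delta(x)=D(x)-x$; assume $D$ is differentiable on $(0,1)$. For $\tau_1\in(0,1]$ and $\tau_2>0$ define \[ E_0=\tau_1(1-\log\tau_1+\log\tau_2),\qquad V_0=\tau_1\bigl(1+(1-\tau_1)(1-\log\tau_1+\log\tau_2)^2\bigr), \] \[ E_1=\int_0^{\tau_1}-\log\!\Big(\frac{u}{\tau_2}\Big)D'(u)\,du,\qquad \Delta=E_1-E_0,\qquad c(\tau_1,\tau_2)=\frac{\Delta^2}{V_0}. \] If $\tau^*\in(0,1)$ is a solution of the equation \[ \int_0^{x}\log(u)\,d\delta(u)=\delta(x)\Big(\log(x)-\frac{2-x}{1-x}\Big), \] then the point $(\tau_1,\tau_2)=(\tau^*,\tau^* )$ satisfies the first-order conditions for maximizing $c$, i.e. $\frac{\partial c}{\partial\tau_1}(\tau^*,\tau^* )=0$ and $\frac{\partial c}{\partial\tau_2}(\tau^*,\tau^* )=0$.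
   Context: Setting: i.i.d. input statistics $X_1,\dots,X_n$ with $H_0: X_i\sim F_0$ versus $H_1: X_i\sim F_1$, input $p$-values $P_i=\bar F_0(X_i)$. The TFisher statistic is $W_n(\tau_1,\tau_2)=\sum_{i=1}^n\bigl(-2\log P_i+2\log\tau_2\bigr)I(P_i\le\tau_1)$. Under $H_0$, $E_0$ and $V_0$ are the mean and variance of $-\log(P_i/\tau_2)I(P_i\le\tau_1)$, and $E_1$ is its mean under $H_1$ (with $D(P_i)$ uniform on $[0,1]$ under $H_1$). The quantity $c(\tau_1,\tau_2)$ is the Bahadur efficiency of $W_n(\tau_1,\tau_2)$. The choice $\tau_1=\tau_2$ is called soft-thresholding. *)

theory Defs
  imports "HOL-Analysis.Analysis"
begin

definition continuous_cdf :: "(real \<Rightarrow> real) \<Rightarrow> bool" where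
  "continuous_cdf F \<longleftrightarrow> mono F \<and> (F \<longlongrightarrow> 0) at_bot \<and> (F \<longlongrightarrow> 1) at_top
      \<and> continuous_on UNIV F"

definition surv :: "(real \<Rightarrow> real) \<Rightarrow> real \<Rightarrow> real" where
  "surv F t = 1 - F t"

definition surv_inv :: "(real \<Rightarrow> real) \<Rightarrow> real \<Rightarrow> real" where
  "surv_inv F x = Inf {t. surv F t \<le> x}"

definition Dfun :: "(real \<Rightarrow> real) \<Rightarrow> (real \<Rightarrow> real) \<Rightarrow> real \<Rightarrow> real" where
  "Dfun F0 F1 x = surv F1 (surv_inv F0 x)"

definition E0 :: "real \<Rightarrow> real \<Rightarrow> real" where
  "E0 t1 t2 = t1 * (1 - ln t1 + ln t2)"

definition V0 :: "real \<Rightarrow> real \<Rightarrow> real" where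
  "V0 t1 t2 = t1 * (1 + (1 - t1) * (1 - ln t1 + ln t2)^2)"

definition E1 :: "(real \<Rightarrow> real) \<Rightarrow> real \<Rightarrow> real \<Rightarrow> real" where
  "E1 D t1 t2 = integral {0..t1} (\<lambda>u. - ln (u / t2) * deriv D u)"

definition Bahadur_c :: "(real \<Rightarrow> real) \<Rightarrow> real \<Rightarrow> real \<Rightarrow> real" where
  "Bahadur_c D t1 t2 = (E1 D t1 t2 - E0 t1 t2)^2 / V0 t1 t2"

end

theory Submission imports Defs "HOL-Real_Asymp.Real_Asymp" begin

text \<open>On the diagonal \<tau>1 = \<tau>2 = s the functions E0, V0 and E1 are all stationary in
  \<tau>1: for E1 because its integrand -log(u/s) D'(u) vanishes at u = s. Since D' need not be
  continuous, this is derived from an explicit antiderivative of the integrand obtained by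
  integrating by parts. Hence \<partial>c/\<partial>\<tau>1 = 0. In \<tau>2, E1 = log \<tau>2 D(s) - \<integral>[0,s] log u D'(u) du,
  and the quotient rule shows that \<partial>c/\<partial>\<tau>2 vanishes once \<Delta>(s,s) = \<delta>(s)(2-s)/(1-s);
  with \<integral>[0,s] log u du = s log s - s this is exactly the integral equation satisfied by \<tau>*.\<close>

lemma continuous_on_Icc_0I:
  fixes f :: "real \<Rightarrow> real"
  assumes "0 < b" "\<And>x. 0 < x \<Longrightarrow> x \<le> b \<Longrightarrow> isCont f x" "(f \<longlongrightarrow> f 0) (at_right 0)"
  shows "continuous_on {0..b} f"
proof (rule continuous_on_IccI)
  show "(f \<longlongrightarrow> f b) (at_left b)" using assms(1) assms(2)[of b]
    by (auto simp: isCont_def intro: filterlim_mono[OF _ order_refl at_le])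
  show "\<And>x. 0 < x \<Longrightarrow> x < b \<Longrightarrow> f \<midarrow>x\<rightarrow> f x" using assms(2) by (simp add: isCont_def)
qed (use assms in auto)

lemma has_integral_deriv_Icc_0:
  fixes f :: "real \<Rightarrow> real"
  assumes "0 < t" "\<And>x. 0 < x \<Longrightarrow> x \<le> t \<Longrightarrow> f differentiable at x"
    and "(f \<longlongrightarrow> L) (at_right 0)"
  shows "(deriv f has_integral (f t - L)) {0..t}"
proof -
  define f0 where "f0 u = (if u = 0 then L else f u)" for u
  have f0_eq: "\<forall>\<^sub>F u in nhds x. f0 u = f u" if "0 < x" for x
  proof -
    have "\<forall>\<^sub>F u in nhds x. u \<in> {0<..}"
      using that by (intro eventually_nhds_in_open) auto
    then show ?thesis by eventually_elim (auto simp: f0_def)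
  qed
  have df: "(f has_real_derivative deriv f x) (at x)" if "0 < x" "x \<le> t" for x
    using assms(2)[OF that] by (simp add: DERIV_deriv_iff_real_differentiable)
  have "continuous_on {0..t} f0"
  proof (rule continuous_on_Icc_0I)
    have "\<forall>\<^sub>F u in at_right 0. f u = f0 u"
      by (auto simp: f0_def eventually_at_filter)
    then show "(f0 \<longlongrightarrow> f0 0) (at_right 0)"
      using assms(3) by (simp add: tendsto_cong f0_def[of 0])
    show "isCont f0 x" if "0 < x" "x \<le> t" for x
      using isCont_cong[OF f0_eq[OF that(1)]] DERIV_isCont[OF df[OF that]] by simp
  qed (use assms in auto)
  then have "(deriv f has_integral (f0 t - f0 0)) {0..t}"
  proof (rule fundamental_theorem_of_calculus_interior[rotated])
    fix x assume x: "x \<in> {0<..<t}"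
    then have "(f0 has_real_derivative deriv f x) (at x)"
      using df[of x] f0_eq[of x] by (subst DERIV_cong_ev[OF refl _ refl]) auto
    then show "(f0 has_vector_derivative deriv f x) (at x)"
      by (simp add: has_real_derivative_iff_has_vector_derivative)
  qed (use assms in auto)
  then show ?thesis using assms(1) by (simp add: f0_def)
qed

lemma ln_has_integral_Icc_0:
  fixes t :: real
  assumes "0 < t"
  shows "(ln has_integral (t * ln t - t)) {0..t}"
proof -
  have d: "((\<lambda>u. u * ln u - u) has_real_derivative ln x) (at x)" if "0 < x" for x :: real
    using that by (auto intro!: derivative_eq_intros)
  have "((\<lambda>u::real. u * ln u - u) \<longlongrightarrow> 0) (at_right 0)" by real_asymp
  then have I: "(deriv (\<lambda>u. u * ln u - u) has_integral (t * ln t - t - 0)) {0..t}"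
    by (intro has_integral_deriv_Icc_0[OF assms]) (use d in \<open>auto simp: real_differentiable_def\<close>)
  have "(ln has_integral (t * ln t - t - 0)) {0..t}"
    by (rule has_integral_spike[OF negligible_sing[of 0] _ I]) (auto intro!: DERIV_imp_deriv[symmetric] d)
  then show ?thesis by simp
qed

lemma indefinite_integral_has_real_derivative:
  fixes g G :: "real \<Rightarrow> real"
  assumes "p \<le> a" "a < s" "s < b"
    and G: "\<And>x. a < x \<Longrightarrow> x < b \<Longrightarrow> (G has_real_derivative g x) (at x)"
    and g: "\<And>t. a < t \<Longrightarrow> t < b \<Longrightarrow> g integrable_on {p..t}"
  shows "((\<lambda>t. integral {p..t} g) has_real_derivative g s) (at s)"
proof -
  define c where "c = (a + s) / 2"
  have c: "p \<le> c" "a < c" "c < s" using assms(1-3) by (auto simp: c_def)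
  have "integral {p..t} g = integral {p..c} g + (G t - G c)" if "c < t" "t < b" for t
  proof -
    have "(g has_integral (G t - G c)) {c..t}"
    proof (rule fundamental_theorem_of_calculus)
      fix x assume "x \<in> {c..t}"
      then show "(G has_vector_derivative g x) (at x within {c..t})"
        using G[of x] c that
        by (auto simp: has_real_derivative_iff_has_vector_derivative[symmetric]
            intro: has_field_derivative_at_within)
    qed (use that in auto)
    moreover have "integral {p..c} g + integral {c..t} g = integral {p..t} g"
      using c that g[of t] by (intro Henstock_Kurzweil_Integration.integral_combine) auto
    ultimately show ?thesis using integral_unique by metis
  qed
  moreover have "\<forall>\<^sub>F t in nhds s. t \<in> {c<..<b}"
    using c assms(3) by (intro eventually_nhds_in_open) auto
  ultimately have ev: "\<forall>\<^sub>F t in nhds s. integral {p..c} g + (G t - G c) = integral {p..t} g"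
    by (auto elim: eventually_mono)
  have "((\<lambda>t. integral {p..c} g + (G t - G c)) has_real_derivative g s) (at s)"
    using G[of s] c assms(3) by (auto intro!: derivative_eq_intros)
  then show ?thesis using DERIV_cong_ev[OF refl ev refl] by simp
qed

lemma E1_integrand_has_integral:
  fixes D :: "real \<Rightarrow> real"
  assumes "0 < t" "0 < c"
    and "\<And>x. 0 < x \<Longrightarrow> x \<le> t \<Longrightarrow> D differentiable at x"
    and "(D \<longlongrightarrow> 0) (at_right 0)"
    and "(\<lambda>u. ln u * deriv D u) integrable_on {0..t}"
  shows "((\<lambda>u. - ln (u / c) * deriv D u) has_integral
           (ln c * D t - integral {0..t} (\<lambda>u. ln u * deriv D u))) {0..t}"
proof (rule has_integral_spike[OF negligible_sing[of 0]])
  have "(deriv D has_integral (D t - 0)) {0..t}"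
    using has_integral_deriv_Icc_0 assms(1,3,4) by blast
  then show "((\<lambda>u. ln c * deriv D u - ln u * deriv D u) has_integral
               (ln c * D t - integral {0..t} (\<lambda>u. ln u * deriv D u))) {0..t}"
    using assms(5) by (auto intro!: has_integral_diff has_integral_mult_right)
  fix x assume "x \<in> {0..t} - {0}"
  then show "- ln (x / c) * deriv D x = ln c * deriv D x - ln x * deriv D x"
    using assms(2) by (auto simp: ln_div algebra_simps)
qed

text \<open>Near s the integrand is the derivative of t \<mapsto> \<integral> D(u)/u du - (ln t - ln s) D(t).\<close>
lemma E1_has_real_derivative_diagonal:
  fixes D :: "real \<Rightarrow> real"
  assumes "0 \<le> a" "a < s" "s < b"
    and dD: "\<And>x. a < x \<Longrightarrow> x < b \<Longrightarrow> D differentiable at x"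
    and int: "\<And>t. a < t \<Longrightarrow> t < b \<Longrightarrow> (\<lambda>u. - ln (u / s) * deriv D u) integrable_on {0..t}"
  shows "((\<lambda>t. E1 D t s) has_real_derivative 0) (at s)"
proof -
  define a' where "a' = (a + s) / 2"
  define b' where "b' = (s + b) / 2"
  have ab: "0 < a'" "a < a'" "a' < s" "s < b'" "b' < b"
    using assms(1-3) by (auto simp: a'_def b'_def)
  have D': "(D has_real_derivative deriv D x) (at x)" if "a < x" "x < b" for x
    using dD[OF that] by (simp add: DERIV_deriv_iff_real_differentiable)
  have "continuous_on {a'..b'} (\<lambda>u. D u / u)"
    using ab by (intro continuous_at_imp_continuous_on ballI continuous_intros
        DERIV_isCont[OF D']) auto
  note M_within = integral_has_real_derivative[OF this]
  have M: "((\<lambda>t. integral {a'..t} (\<lambda>u. D u / u)) has_real_derivative D x / x) (at x)"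
    if "a' < x" "x < b'" for x
    using M_within[of x] that by (simp add: at_within_Icc_at)
  have "((\<lambda>t. integral {0..t} (\<lambda>u. - ln (u / s) * deriv D u)) has_real_derivative
          - ln (s / s) * deriv D s) (at s)"
  proof (rule indefinite_integral_has_real_derivative[OF _ ab(3,4)])
    fix x assume x: "a' < x" "x < b'"
    show "((\<lambda>t. integral {a'..t} (\<lambda>u. D u / u) - (ln t - ln s) * D t) has_real_derivative
            - ln (x / s) * deriv D x) (at x)"
      using x ab by (auto intro!: derivative_eq_intros M D' simp: ln_div field_simps)
  qed (use ab int in auto)
  then show ?thesis using assms(2,3) ab by (simp add: E1_def)
qed

lemma E0_has_real_derivative_diagonal:
  "0 < s \<Longrightarrow> ((\<lambda>t. E0 t s) has_real_derivative 0) (at s)"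
  unfolding E0_def by (auto intro!: derivative_eq_intros)

lemma V0_has_real_derivative_diagonal:
  "0 < s \<Longrightarrow> ((\<lambda>t. V0 t s) has_real_derivative 0) (at s)"
  unfolding V0_def by (auto intro!: derivative_eq_intros simp: field_simps)

lemma Bahadur_c_has_real_derivative_first:
  fixes D :: "real \<Rightarrow> real"
  assumes "0 < s" "s < 1" and E1: "((\<lambda>t. E1 D t s) has_real_derivative 0) (at s)"
  shows "((\<lambda>t1. Bahadur_c D t1 s) has_real_derivative 0) (at s)"
proof -
  have "V0 s s \<noteq> 0" using assms(1,2) by (simp add: V0_def)
  then show ?thesis
    unfolding Bahadur_c_def
    using DERIV_divide[OF DERIV_power[OF DERIV_diff[OF E1 E0_has_real_derivative_diagonal]]
        V0_has_real_derivative_diagonal] assms(1) by simp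
qed

lemma Bahadur_c_has_real_derivative_second:
  fixes D :: "real \<Rightarrow> real"
  assumes s: "0 < s" "s < 1"
    and E1: "\<And>c. 0 < c \<Longrightarrow> E1 D s c = ln c * D s - I"
    and I: "ln s * D s - I - s = (D s - s) * (2 - s) / (1 - s)"
  shows "((\<lambda>t2. Bahadur_c D s t2) has_real_derivative 0) (at s)"
proof -
  define \<Delta> where "\<Delta> c = ln c * D s - I - E0 s c" for c
  have "\<forall>\<^sub>F c in nhds s. c \<in> {0<..}"
    using s by (intro eventually_nhds_in_open) auto
  then have ev: "\<forall>\<^sub>F c in nhds s. \<Delta> c ^ 2 / V0 s c = Bahadur_c D s c"
    by eventually_elim (simp add: Bahadur_c_def E1 \<Delta>_def)
  have d\<Delta>: "(\<Delta> has_real_derivative (D s - s) / s) (at s)"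
    unfolding \<Delta>_def E0_def using s by (auto intro!: derivative_eq_intros simp: field_simps)
  have dV0: "((\<lambda>c. V0 s c) has_real_derivative 2 * (1 - s)) (at s)"
    unfolding V0_def using s by (auto intro!: derivative_eq_intros simp: field_simps)
  have \<Delta>s: "\<Delta> s * (1 - s) = (D s - s) * (2 - s)"
    using I s by (simp add: \<Delta>_def E0_def field_simps)
  have V0s: "V0 s s = s * (2 - s)"
    by (simp add: V0_def algebra_simps)
  have "of_nat 2 * ((D s - s) / s * \<Delta> s ^ (2 - Suc 0)) * V0 s s - \<Delta> s ^ 2 * (2 * (1 - s))
      = 2 * \<Delta> s * ((D s - s) * (2 - s) - \<Delta> s * (1 - s))" (is "?numerator = _")
    using s by (simp add: V0s power2_eq_square field_simps)
  also have "\<dots> = 0" using \<Delta>s by simp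
  finally have N: "?numerator = 0" .
  have "V0 s s \<noteq> 0" using s V0s by simp
  from DERIV_divide[OF DERIV_power[OF d\<Delta>, of 2] dV0 this]
  have "((\<lambda>c. \<Delta> c ^ 2 / V0 s c) has_real_derivative 0) (at s)"
    unfolding N by simp
  then show ?thesis using DERIV_cong_ev[OF refl ev refl] by simp
qed

theorem lemma1:
  fixes F0 F1 :: "real \<Rightarrow> real" and \<tau> :: real
  defines "D \<equiv> Dfun F0 F1"
  assumes "continuous_cdf F0" and "continuous_cdf F1"
    and "D differentiable_on {0<..<1}"
    and "(D \<longlongrightarrow> 0) (at_right 0)"
    and "\<forall>x\<in>{0<..<1}. (\<lambda>u. ln u * deriv D u) integrable_on {0..x}"
    and "\<forall>x\<in>{0<..<1}. deriv D integrable_on {0..x}"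
    and "0 < \<tau>" and "\<tau> < 1"
    and "integral {0..\<tau>} (\<lambda>u. ln u * (deriv D u - 1))
           = (D \<tau> - \<tau>) * (ln \<tau> - (2 - \<tau>) / (1 - \<tau>))"
  shows "((\<lambda>t1. Bahadur_c D t1 \<tau>) has_real_derivative 0) (at \<tau>)
       \<and> ((\<lambda>t2. Bahadur_c D \<tau> t2) has_real_derivative 0) (at \<tau>)"
proof -
  note \<tau> = assms(8,9)
  have dD: "D differentiable at x" if "0 < x" "x < 1" for x
    using assms(4) that by (simp add: differentiable_on_eq_differentiable_at)
  define I where "I t = integral {0..t} (\<lambda>u. ln u * deriv D u)" for t
  have E1_int: "((\<lambda>u. - ln (u / c) * deriv D u) has_integral (ln c * D t - I t)) {0..t}"
    if "0 < t" "t < 1" "0 < c" for t c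
    unfolding I_def using that dD assms(5,6)
    by (intro E1_integrand_has_integral) auto
  have "((\<lambda>u. ln u * deriv D u - ln u) has_integral (I \<tau> - (\<tau> * ln \<tau> - \<tau>))) {0..\<tau>}"
    unfolding I_def using assms(6) \<tau>
    by (intro has_integral_diff integrable_integral ln_has_integral_Icc_0) auto
  then have "ln \<tau> * D \<tau> - I \<tau> - \<tau> = (D \<tau> - \<tau>) * (2 - \<tau>) / (1 - \<tau>)"
    using assms(10) \<tau> by (simp add: algebra_simps integral_unique)
  moreover have "((\<lambda>t. E1 D t \<tau>) has_real_derivative 0) (at \<tau>)"
    by (rule E1_has_real_derivative_diagonal[of 0 \<tau> 1]) (use \<tau> dD E1_int in auto)
  moreover have "E1 D \<tau> c = ln c * D \<tau> - I \<tau>" if "0 < c" for c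
    unfolding E1_def using E1_int[OF \<tau> that] by (rule integral_unique)
  ultimately show ?thesis
    using Bahadur_c_has_real_derivative_first[OF \<tau>]
      Bahadur_c_has_real_derivative_second[OF \<tau>] by blast
qed

end
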